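(* For every $\epsilon>0$ there exist an online convex optimization problem (convex losses $f_1,f_2,\dots$ with uniformly bounded gradients on a convex feasible set $\mathcal{F}$ of bounded $\ell_\infty$-diameter) and parameters $\beta_1,\beta_2\in[0,1)$ with $\beta_1^2/\sqrt{\beta_2}<1$ and step sizes $\alpha_t=\alpha/\sqrt{t}$ such that Adam with the $\epsilon$-modified update has non-vanishing average regret, i.e. $R_T/T\not\to0$ as $T\to\infty$.
   Context: Regret: $R_T=\sum_{t=1}^T f_t(x_t)-\min_{x\in\mathcal{F}}\sum_{t=1}^T f_t(x)$. $\Pi_{\mathcal{F},A}(y)=\arg\min_{x\in\mathcal{F}}\|A^{1/2}(x-y)\|$. Adam with the $\epsilon$-modified update: $x_1\in\mathcal{F}$, $m_0=v_0=0$; for each $t$: $g_t=\nabla f_t(x_t)$, $m_t=\beta_1 m_{t-1}+(1-\beta_1)g_t$, $v_t=\beta_2 v_{t-1}+(1-\beta_2)g_t^2$, $V_t=\mathrm{diag}(v_t)$, $\hat x_{t+1}=x_t-\alpha_t m_t/\sqrt{V_t+\epsilon I}$, $x_{t+1}=\Pi_{\mathcal{F},\sqrt{V_t}}(\hat x_{t+1})$ (coordinatewise operations). The parameter conditions $\beta_1,\beta_2\in[0,1)$, $\beta_1^2/\sqrt{\beta_2}<1$, $\alpha_t=\alpha/\sqrt t$ are those of Kingma and Ba's convergence analysis of Adam. *)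

theory Defs
  imports "HOL-Analysis.Analysis"
begin

text \<open>Vectors of R^d are represented as functions nat => real vanishing at coordinates >= d.\<close>

definition Rd :: "nat \<Rightarrow> (nat \<Rightarrow> real) set" where
  "Rd d = {x. \<forall>i\<ge>d. x i = 0}"

definition linf_dist :: "nat \<Rightarrow> (nat \<Rightarrow> real) \<Rightarrow> (nat \<Rightarrow> real) \<Rightarrow> real" where
  "linf_dist d x y = Max (insert 0 ((\<lambda>i. \<bar>x i - y i\<bar>) ` {..<d}))"

definition convex_set_Rd :: "nat \<Rightarrow> (nat \<Rightarrow> real) set \<Rightarrow> bool" where
  "convex_set_Rd d F \<longleftrightarrow> F \<subseteq> Rd d \<and>
     (\<forall>x\<in>F. \<forall>y\<in>F. \<forall>u::real. 0 \<le> u \<and> u \<le> 1 \<longrightarrow> (\<lambda>i. u * x i + (1 - u) * y i) \<in> F)"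

definition convex_fun_on :: "(nat \<Rightarrow> real) set \<Rightarrow> ((nat \<Rightarrow> real) \<Rightarrow> real) \<Rightarrow> bool" where
  "convex_fun_on F f \<longleftrightarrow>
     (\<forall>x\<in>F. \<forall>y\<in>F. \<forall>u::real. 0 \<le> u \<and> u \<le> 1 \<longrightarrow>
        f (\<lambda>i. u * x i + (1 - u) * y i) \<le> u * f x + (1 - u) * f y)"

text \<open>Frechet gradient of f : R^d -> R at x (all norms on R^d are equivalent; we use l_inf).\<close>
definition has_gradient :: "nat \<Rightarrow> ((nat \<Rightarrow> real) \<Rightarrow> real) \<Rightarrow> (nat \<Rightarrow> real) \<Rightarrow> (nat \<Rightarrow> real) \<Rightarrow> bool" where
  "has_gradient d f g x \<longleftrightarrow> g \<in> Rd d \<and>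
     (\<forall>e>0. \<exists>\<delta>>0. \<forall>y\<in>Rd d. linf_dist d y x < \<delta> \<longrightarrow>
        \<bar>f y - f x - (\<Sum>i<d. g i * (y i - x i))\<bar> \<le> e * linf_dist d y x)"

definition oco_problem :: "nat \<Rightarrow> (nat \<Rightarrow> real) set \<Rightarrow> (nat \<Rightarrow> (nat \<Rightarrow> real) \<Rightarrow> real)
    \<Rightarrow> (nat \<Rightarrow> (nat \<Rightarrow> real) \<Rightarrow> (nat \<Rightarrow> real)) \<Rightarrow> bool" where
  "oco_problem d F f grad \<longleftrightarrow>
     convex_set_Rd d F \<and>
     (\<exists>D. \<forall>x\<in>F. \<forall>y\<in>F. \<forall>i. \<bar>x i - y i\<bar> \<le> D) \<and>
     (\<forall>t\<ge>1. convex_fun_on F (f t)) \<and>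
     (\<forall>t\<ge>1. \<forall>x\<in>F. has_gradient d (f t) (grad t x) x) \<and>
     (\<exists>G. \<forall>t\<ge>1. \<forall>x\<in>F. \<forall>i. \<bar>grad t x i\<bar> \<le> G)"

text \<open>A run of Adam with the epsilon-modified update (x t is the iterate x_t, t >= 1).
  The weighted projection Pi_{F, sqrt V_t} is an argmin, taken as any minimiser.\<close>
definition adam_eps_run ::
  "nat \<Rightarrow> (nat \<Rightarrow> real) set \<Rightarrow> (nat \<Rightarrow> (nat \<Rightarrow> real) \<Rightarrow> (nat \<Rightarrow> real))
   \<Rightarrow> real \<Rightarrow> real \<Rightarrow> real \<Rightarrow> real
   \<Rightarrow> (nat \<Rightarrow> nat \<Rightarrow> real) \<Rightarrow> (nat \<Rightarrow> nat \<Rightarrow> real) \<Rightarrow> (nat \<Rightarrow> nat \<Rightarrow> real) \<Rightarrow> bool" where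
  "adam_eps_run d F grad \<alpha> \<beta>1 \<beta>2 \<epsilon> x m v \<longleftrightarrow>
     x 1 \<in> F \<and> m 0 = (\<lambda>i. 0) \<and> v 0 = (\<lambda>i. 0) \<and>
     (\<forall>t\<ge>1.
        m t = (\<lambda>i. \<beta>1 * m (t - 1) i + (1 - \<beta>1) * grad t (x t) i) \<and>
        v t = (\<lambda>i. \<beta>2 * v (t - 1) i + (1 - \<beta>2) * (grad t (x t) i)\<^sup>2) \<and>
        (let xhat = (\<lambda>i. x t i - (\<alpha> / sqrt (real t)) * m t i / sqrt (v t i + \<epsilon>)) in
          x (t + 1) \<in> F \<and>
          (\<forall>z\<in>F. (\<Sum>i<d. sqrt (v t i) * (x (t + 1) i - xhat i)\<^sup>2)
                   \<le> (\<Sum>i<d. sqrt (v t i) * (z i - xhat i)\<^sup>2))))"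

definition regret :: "(nat \<Rightarrow> real) set \<Rightarrow> (nat \<Rightarrow> (nat \<Rightarrow> real) \<Rightarrow> real)
    \<Rightarrow> (nat \<Rightarrow> nat \<Rightarrow> real) \<Rightarrow> nat \<Rightarrow> real" where
  "regret F f x T = (\<Sum>t=1..T. f t (x t)) - (INF y\<in>F. \<Sum>t=1..T. f t y)"

end

(*
  Take d = 1, F = [-1, 1], beta1 = 0, beta2 = 1/1000, alpha = 1 and linear losses whose gradients
  are sqrt eps times the periodic pattern 30, -10, -10. Because the gradients scale like sqrt eps
  and the second moment like eps, eps cancels from the eps-modified update, and every run follows
  the clipped recursion y(t+1) = clip (y(t) - s(t)) with an eps-free step s(t). Right after a large
  gradient the second moment is large, so the step towards -1 is at most 1/sqrt t, while each of
  the two following steps away from -1 is at least 0.9/sqrt t'. Hence the iterates at times 3k+1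
  never decrease and stay bounded away from -1 from t = 4 on, and the comparator -1 gains a fixed
  positive amount on the iterates in every period: the regret grows linearly.
*)
theory Submission
  imports Defs
begin

definition clip :: "real \<Rightarrow> real" where
  "clip h = max (-1) (min 1 h)"

lemma clip_bounds: "-1 \<le> clip h \<and> clip h \<le> 1"
  unfolding clip_def by auto

lemma clip_nearest:
  assumes "-1 \<le> z" "z \<le> 1"
  shows "(clip h - h)\<^sup>2 \<le> (z - h)\<^sup>2"
proof -
  have "\<bar>clip h - h\<bar> \<le> \<bar>z - h\<bar>" using assms unfolding clip_def by (auto simp: max_def min_def)
  then show ?thesis by (simp add: abs_le_square_iff)
qed

lemma nearest_eq_clip:
  assumes "-1 \<le> z" "z \<le> 1" "(z - h)\<^sup>2 \<le> (clip h - h)\<^sup>2"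
  shows "z = clip h"
proof -
  have "\<bar>z - h\<bar> \<le> \<bar>clip h - h\<bar>" using assms(3) by (simp add: abs_le_square_iff)
  then show ?thesis using assms(1,2) unfolding clip_def by (auto simp: max_def min_def split: if_splits)
qed

lemma clip_three_steps:
  assumes y: "-1 \<le> y" "y \<le> 1"
    and s: "0 \<le> s1" "s2 < 0" "s3 < 0" "s1 \<le> - s2 - s3"
    and y1: "y1 = clip (y - s1)" and y2: "y2 = clip (y1 - s2)" and y3: "y3 = clip (y2 - s3)"
  shows "y1 \<le> y \<and> y2 \<le> y3 \<and> y \<le> y3 \<and> -1 < y3"
proof -
  have y1_eq: "y1 = max (-1) (y - s1)" using y s y1 unfolding clip_def by simp
  have y2_eq: "y2 = min 1 (y1 - s2)" using y1_eq y s y2 unfolding clip_def by simp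
  have y3_eq: "y3 = min 1 (y2 - s3)" using y2_eq y1_eq y s y3 unfolding clip_def by simp
  have "y \<le> y3"
  proof (cases "y2 - s3 \<le> 1")
    case True
    then have "y2 = y1 - s2" using y2_eq s by (simp add: min_def split: if_splits)
    then show ?thesis using True y1_eq y3_eq s by simp
  next
    case False
    then show ?thesis using y3_eq y by simp
  qed
  moreover have "y1 \<le> y" "y2 \<le> y3" "-1 < y3" using y1_eq y2_eq y3_eq y s by auto
  ultimately show ?thesis by simp
qed

lemma sum_atLeastAtMost_triples:
  fixes g :: "nat \<Rightarrow> 'a::comm_monoid_add"
  shows "(\<Sum>t=1..3*n. g t) = (\<Sum>k<n. g (3*k+1) + g (3*k+2) + g (3*k+3))"
proof (induction n)
  case 0 then show ?case by simp
next
  case (Suc n)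
  have "3 * Suc n = Suc (Suc (Suc (3*n)))" by simp
  then have "(\<Sum>t=1..3 * Suc n. g t) = (\<Sum>t=1..3*n. g t) + g (3*n+1) + g (3*n+2) + g (3*n+3)"
    by (simp add: sum.cl_ivl_Suc add.assoc eval_nat_numeral)
  then show ?case using Suc.IH by (simp add: add.assoc)
qed

lemma sum_lessThan_ge_of_mono:
  fixes f :: "nat \<Rightarrow> real"
  assumes mono: "\<And>k. f k \<le> f (Suc k)" and "0 \<le> f 0"
  shows "(real n - 1) * f 1 \<le> (\<Sum>k<n. f k)"
proof (induction n)
  case 0
  have "0 \<le> f 1" using assms(2) mono[of 0] by simp
  then show ?case by simp
next
  case (Suc n)
  show ?case
  proof (cases n)
    case 0 then show ?thesis using assms by simp
  next
    case (Suc j)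
    then have "f 1 \<le> f n" using lift_Suc_mono_le[of f 1 n, OF mono] by simp
    then show ?thesis using Suc.IH by (simp add: algebra_simps)
  qed
qed

lemma not_tendsto_zero_of_linear_growth:
  fixes r :: "nat \<Rightarrow> real"
  assumes "0 < k" "0 < a" and growth: "\<And>n. a * real n - b \<le> r (k * n)"
  shows "\<not> (\<lambda>T. r T / real T) \<longlonglongrightarrow> 0"
proof
  assume lim: "(\<lambda>T. r T / real T) \<longlonglongrightarrow> 0"
  have sub: "(\<lambda>n. r (k * n) / real (k * n)) \<longlonglongrightarrow> 0"
    using LIMSEQ_subseq_LIMSEQ[OF lim, of "\<lambda>n. k * n"] assms(1)
    unfolding strict_mono_def comp_def by simp
  have lower: "(\<lambda>n. a / k - (b / k) / real n) \<longlonglongrightarrow> a / k - 0"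
    by (intro tendsto_diff tendsto_const lim_const_over_n)
  have "a / k - (b / k) / real n \<le> r (k * n) / real (k * n)" if "n \<ge> 1" for n
  proof -
    have "a / k - (b / k) / real n = (a * real n - b) / real (k * n)"
      using that assms(1) by (simp add: field_simps)
    then show ?thesis using growth[of n] that assms(1) by (simp add: divide_right_mono)
  qed
  then have "a / k - 0 \<le> 0"
    using LIMSEQ_le[OF lower sub] by blast
  then show False using assms by (simp add: divide_le_0_iff)
qed

lemma inv_sqrt_le_next_two:
  assumes "t \<ge> (1::nat)"
  shows "1 / sqrt (real t) \<le> 0.9 / sqrt (real (t + 1)) + 0.9 / sqrt (real (t + 2))"
proof -
  have tp: "0 < sqrt (real t)" using assms by simp
  have "(1.8 * sqrt (real t))\<^sup>2 = 3.24 * real t"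
    by (simp only: power_mult_distrib real_sqrt_pow2[OF of_nat_0_le_iff]) (simp add: power2_eq_square)
  then have "real (t + 2) \<le> (1.8 * sqrt (real t))\<^sup>2"
    using assms by simp
  then have "sqrt (real (t + 2)) \<le> sqrt ((1.8 * sqrt (real t))\<^sup>2)"
    by (subst real_sqrt_le_iff)
  then have t2: "sqrt (real (t + 2)) \<le> 1.8 * sqrt (real t)"
    using tp by simp
  have "1 / sqrt (real t) \<le> 0.9 / sqrt (real (t + 2)) + 0.9 / sqrt (real (t + 2))"
    using t2 tp by (simp add: divide_simps)
  also have "\<dots> \<le> 0.9 / sqrt (real (t + 1)) + 0.9 / sqrt (real (t + 2))"
    using divide_left_mono[of "sqrt (real (t + 1))" "sqrt (real (t + 2))" "0.9"] by simp
  finally show ?thesis .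
qed

lemma regret_ge_comparator:
  assumes "y \<in> F" "bdd_below ((\<lambda>y. \<Sum>t=1..T. f t y) ` F)"
  shows "(\<Sum>t=1..T. f t (x t)) - (\<Sum>t=1..T. f t y) \<le> regret F f x T"
  unfolding regret_def using cINF_lower[OF assms(2,1)] by simp

lemma linf_dist_nonneg: "0 \<le> linf_dist d x y"
  unfolding linf_dist_def by (rule Max_ge) auto

lemma has_gradient_linear:
  assumes "c \<in> Rd d"
  shows "has_gradient d (\<lambda>y. \<Sum>i<d. c i * y i) c x"
  unfolding has_gradient_def
proof (intro conjI allI impI)
  fix e :: real assume "0 < e"
  have "(\<Sum>i<d. c i * y i) - (\<Sum>i<d. c i * x i) - (\<Sum>i<d. c i * (y i - x i)) = 0" for y
    by (simp add: sum_subtractf[symmetric] algebra_simps)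
  then show "\<exists>\<delta>>0. \<forall>y\<in>Rd d. linf_dist d y x < \<delta> \<longrightarrow>
      \<bar>(\<Sum>i<d. c i * y i) - (\<Sum>i<d. c i * x i) - (\<Sum>i<d. c i * (y i - x i))\<bar> \<le> e * linf_dist d y x"
    using \<open>0 < e\<close> linf_dist_nonneg by (intro exI[of _ 1]) simp
qed (use assms in simp)

lemma convex_fun_on_linear: "convex_fun_on F (\<lambda>y. \<Sum>i<d. c i * y i)"
proof -
  have "(\<Sum>i<d. c i * (u * x i + (1 - u) * y i))
      = u * (\<Sum>i<d. c i * x i) + (1 - u) * (\<Sum>i<d. c i * y i)" for x y :: "nat \<Rightarrow> real" and u
  proof -
    have "(\<Sum>i<d. c i * (u * x i + (1 - u) * y i)) = (\<Sum>i<d. u * (c i * x i) + (1 - u) * (c i * y i))"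
      by (simp add: algebra_simps)
    then show ?thesis by (simp only: sum.distrib sum_distrib_left)
  qed
  then show ?thesis unfolding convex_fun_on_def by simp
qed

definition adv_coeff :: "nat \<Rightarrow> real" where
  "adv_coeff t = (if t mod 3 = 1 then 30 else -10)"

text \<open>Adam's second moment v t divided by eps, for the gradients sqrt eps * adv_coeff t and
  beta2 = 1/1000.\<close>
fun norm_second_moment :: "nat \<Rightarrow> real" where
  "norm_second_moment 0 = 0"
| "norm_second_moment (Suc t) = norm_second_moment t / 1000 + (999 / 1000) * (adv_coeff (Suc t))\<^sup>2"

definition eff_step :: "nat \<Rightarrow> real" where
  "eff_step t = adv_coeff t / (sqrt (real t) * sqrt (norm_second_moment t + 1))"

lemma adv_coeff_sq: "(adv_coeff t)\<^sup>2 = (if t mod 3 = 1 then 900 else 100)"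
  by (simp add: adv_coeff_def power2_eq_square)

lemma norm_second_moment_bounds: "0 \<le> norm_second_moment t \<and> norm_second_moment t \<le> 900"
  by (induction t) (auto simp: adv_coeff_sq)

lemma norm_second_moment_Suc_bounds:
  "99 \<le> norm_second_moment (Suc t) \<and>
   (Suc t mod 3 = 1 \<longrightarrow> 899 \<le> norm_second_moment (Suc t)) \<and>
   (Suc t mod 3 \<noteq> 1 \<longrightarrow> norm_second_moment (Suc t) \<le> 101)"
  using norm_second_moment_bounds[of t] by (simp add: adv_coeff_sq)

lemma eff_step_descent:
  assumes "t mod 3 = 1"
  shows "0 < eff_step t \<and> eff_step t \<le> 1 / sqrt (real t)"
proof -
  obtain s where t: "t = Suc s" using assms by (cases t) auto
  have w899: "899 \<le> norm_second_moment t" using norm_second_moment_Suc_bounds[of s] assms t by simp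
  then have "sqrt 900 \<le> sqrt (norm_second_moment t + 1)" by (subst real_sqrt_le_iff) simp
  then have w: "30 \<le> sqrt (norm_second_moment t + 1)" by (simp add: real_sqrt_unique)
  have tp: "0 < sqrt (real t)" using t by simp
  have "eff_step t = 30 / (sqrt (real t) * sqrt (norm_second_moment t + 1))"
    using assms by (simp add: eff_step_def adv_coeff_def)
  also have "\<dots> \<le> 30 / (sqrt (real t) * 30)"
    using w w899 tp by (intro divide_left_mono mult_left_mono mult_pos_pos) auto
  moreover have "0 < sqrt (real t) * sqrt (norm_second_moment t + 1)"
    using w899 tp by (intro mult_pos_pos) auto
  ultimately show ?thesis using assms by (simp add: eff_step_def adv_coeff_def)
qed

lemma eff_step_ascent:
  assumes "t \<ge> 1" "t mod 3 \<noteq> 1"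
  shows "eff_step t < 0 \<and> 0.9 / sqrt (real t) \<le> - eff_step t"
proof -
  obtain s where t: "t = Suc s" using assms by (cases t) auto
  have w: "99 \<le> norm_second_moment t" "norm_second_moment t \<le> 101"
    using norm_second_moment_Suc_bounds[of s] assms t by simp_all
  then have "sqrt (norm_second_moment t + 1) \<le> sqrt 121" by (subst real_sqrt_le_iff) simp
  then have w11: "sqrt (norm_second_moment t + 1) \<le> 11" by (simp add: real_sqrt_unique)
  have w0: "0 < sqrt (norm_second_moment t + 1)" using w by simp
  have tp: "0 < sqrt (real t)" using t by simp
  have "0.9 / sqrt (real t) \<le> 10 / (sqrt (real t) * 11)" using tp by (simp add: divide_simps)
  also have "\<dots> \<le> 10 / (sqrt (real t) * sqrt (norm_second_moment t + 1))"
    using w11 w0 tp by (intro divide_left_mono mult_left_mono mult_pos_pos) auto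
  also have "\<dots> = - eff_step t" using assms by (simp add: eff_step_def adv_coeff_def)
  finally show ?thesis using w0 tp assms by (simp add: eff_step_def adv_coeff_def)
qed

lemma eff_step_period_balance:
  assumes "t mod 3 = 1"
  shows "eff_step t \<le> - eff_step (t + 1) - eff_step (t + 2)"
proof -
  have "t \<ge> 1" "(t + 1) mod 3 \<noteq> 1" "(t + 2) mod 3 \<noteq> 1" using assms by presburger+
  then show ?thesis using eff_step_descent[OF assms] eff_step_ascent[of "t + 1"]
      eff_step_ascent[of "t + 2"] inv_sqrt_le_next_two[of t] by simp
qed

lemma eff_step_iteration_period:
  fixes y :: "nat \<Rightarrow> real"
  assumes rec: "\<And>t. t \<ge> 1 \<Longrightarrow> y (Suc t) = clip (y t - eff_step t)"
    and y1: "-1 \<le> y 1" "y 1 \<le> 1"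
  shows "y (3*k+2) \<le> y (3*k+1) \<and> y (3*k+3) \<le> y (3*k+4) \<and> y (3*k+1) \<le> y (3*k+4) \<and> -1 < y (3*k+4)"
proof -
  define t where "t = 3*k+1"
  have t: "t mod 3 = 1" "(t + 1) mod 3 \<noteq> 1" "(t + 2) mod 3 \<noteq> 1" unfolding t_def by presburger+
  have "-1 \<le> y t \<and> y t \<le> 1"
  proof (cases k)
    case 0 then show ?thesis using y1 t_def by simp
  next
    case (Suc j)
    then have "y t = clip (y (3*j+3) - eff_step (3*j+3))" using rec[of "3*j+3"] t_def by simp
    then show ?thesis using clip_bounds by simp
  qed
  moreover have "y (t + 1) = clip (y t - eff_step t)" "y (t + 2) = clip (y (t + 1) - eff_step (t + 1))"
    "y (t + 3) = clip (y (t + 2) - eff_step (t + 2))"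
    using rec[of t] rec[of "t + 1"] rec[of "t + 2"] t_def by (simp_all add: eval_nat_numeral)
  ultimately have period: "y (t + 1) \<le> y t \<and> y (t + 2) \<le> y (t + 3) \<and> y t \<le> y (t + 3) \<and> -1 < y (t + 3)"
    using eff_step_descent[OF t(1)] eff_step_ascent[of "t + 1"] eff_step_ascent[of "t + 2"]
      eff_step_period_balance[OF t(1)] t
    by (intro clip_three_steps[of "y t" "eff_step t" "eff_step (t + 1)" "eff_step (t + 2)"]) auto
  have "3*k+1 = t" "3*k+2 = t + 1" "3*k+3 = t + 2" "3*k+4 = t + 3" by (simp_all add: t_def)
  then show ?thesis using period by (simp only:)
qed

lemma adv_coeff_weighted_sum_lower_bound:
  fixes z :: "nat \<Rightarrow> real"
  assumes "\<And>k. z (3*k+2) \<le> z (3*k+1)" "\<And>k. z (3*k+3) \<le> z (3*k+4)"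
  shows "10 * (\<Sum>k<n. z (3*k+1)) + 10 * (z 1 - z (3*n+1)) \<le> (\<Sum>t=1..3*n. adv_coeff t * z t)"
proof -
  have coeffs: "adv_coeff (3*k+1) = 30" "adv_coeff (3*k+2) = -10" "adv_coeff (3*k+3) = -10" for k
  proof -
    have "(3*k+1) mod 3 = 1" "(3*k+2) mod 3 = 2" "(3*k+3) mod 3 = 0" by presburger+
    then show "adv_coeff (3*k+1) = 30" "adv_coeff (3*k+2) = -10" "adv_coeff (3*k+3) = -10"
      by (simp_all add: adv_coeff_def)
  qed
  have "(\<Sum>k<n. z (3*k+1) - z (3*Suc k+1)) = z 1 - z (3*n+1)"
    using sum_lessThan_telescope'[of "\<lambda>k. z (3*k+1)" n] by simp
  then have "10 * (\<Sum>k<n. z (3*k+1)) + 10 * (z 1 - z (3*n+1))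
      = (\<Sum>k<n. 10 * z (3*k+1) + 10 * (z (3*k+1) - z (3*Suc k+1)))"
    by (simp only: sum.distrib flip: sum_distrib_left)
  also have "\<dots> \<le> (\<Sum>k<n. 30 * z (3*k+1) - 10 * z (3*k+2) - 10 * z (3*k+3))"
  proof (rule sum_mono)
    fix k
    have "3*Suc k+1 = 3*k+4" by simp
    then show "10 * z (3*k+1) + 10 * (z (3*k+1) - z (3*Suc k+1))
        \<le> 30 * z (3*k+1) - 10 * z (3*k+2) - 10 * z (3*k+3)"
      using assms(1)[of k] assms(2)[of k] by (simp only:) argo
  qed
  also have "\<dots> = (\<Sum>t=1..3*n. adv_coeff t * z t)"
    unfolding sum_atLeastAtMost_triples coeffs by simp
  finally show ?thesis .
qed

definition adv_domain :: "(nat \<Rightarrow> real) set" where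
  "adv_domain = {x \<in> Rd 1. -1 \<le> x 0 \<and> x 0 \<le> 1}"

definition adv_grad :: "real \<Rightarrow> nat \<Rightarrow> nat \<Rightarrow> real" where
  "adv_grad \<epsilon> t = (\<lambda>i. if i = 0 then adv_coeff t * sqrt \<epsilon> else 0)"

definition adv_loss :: "real \<Rightarrow> nat \<Rightarrow> (nat \<Rightarrow> real) \<Rightarrow> real" where
  "adv_loss \<epsilon> t = (\<lambda>y. \<Sum>i<1. adv_grad \<epsilon> t i * y i)"

lemma adv_domain_convex: "convex_set_Rd 1 adv_domain"
  unfolding convex_set_Rd_def
proof (intro conjI ballI allI impI)
  show "adv_domain \<subseteq> Rd 1" unfolding adv_domain_def by auto
  fix x y and u :: real
  assume x: "x \<in> adv_domain" and y: "y \<in> adv_domain" and u: "0 \<le> u \<and> u \<le> 1"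
  have "u * x 0 \<le> u" "(1 - u) * y 0 \<le> 1 - u" "-u \<le> u * x 0" "-(1 - u) \<le> (1 - u) * y 0"
    using x y u unfolding adv_domain_def
    by (auto intro: mult_left_le mult_left_mono[of "-1" _ u, simplified]
        mult_left_mono[of "-1" _ "1 - u", simplified])
  then show "(\<lambda>i. u * x i + (1 - u) * y i) \<in> adv_domain"
    using x y unfolding adv_domain_def Rd_def by auto
qed

lemma adv_oco_problem: "oco_problem 1 adv_domain (adv_loss \<epsilon>) (\<lambda>t x. adv_grad \<epsilon> t)"
  unfolding oco_problem_def
proof (intro conjI)
  show "\<exists>D. \<forall>x\<in>adv_domain. \<forall>y\<in>adv_domain. \<forall>i. \<bar>x i - y i\<bar> \<le> D"
  proof (intro exI[of _ 2] ballI allI)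
    fix x y i assume "x \<in> adv_domain" "y \<in> adv_domain"
    then show "\<bar>x i - y i\<bar> \<le> 2" unfolding adv_domain_def Rd_def by (cases "i = 0") auto
  qed
  show "\<forall>t\<ge>1. convex_fun_on adv_domain (adv_loss \<epsilon> t)"
    unfolding adv_loss_def using convex_fun_on_linear by blast
  have "adv_grad \<epsilon> t \<in> Rd 1" for t by (simp add: adv_grad_def Rd_def)
  then show "\<forall>t\<ge>1. \<forall>x\<in>adv_domain. has_gradient 1 (adv_loss \<epsilon> t) (adv_grad \<epsilon> t) x"
    unfolding adv_loss_def using has_gradient_linear by blast
  have "\<bar>adv_coeff t\<bar> \<le> 30" for t by (simp add: adv_coeff_def)
  then show "\<exists>G. \<forall>t\<ge>1. \<forall>x\<in>adv_domain. \<forall>i. \<bar>adv_grad \<epsilon> t i\<bar> \<le> G"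
    by (intro exI[of _ "30 * \<bar>sqrt \<epsilon>\<bar>"]) (auto simp: adv_grad_def abs_mult mult_right_mono)
qed (rule adv_domain_convex)

abbreviation adv_adam_run ::
  "real \<Rightarrow> (nat \<Rightarrow> nat \<Rightarrow> real) \<Rightarrow> (nat \<Rightarrow> nat \<Rightarrow> real) \<Rightarrow> (nat \<Rightarrow> nat \<Rightarrow> real) \<Rightarrow> bool" where
  "adv_adam_run \<epsilon> x m v \<equiv> adam_eps_run 1 adv_domain (\<lambda>t x. adv_grad \<epsilon> t) 1 0 (1/1000) \<epsilon> x m v"

definition adv_second_moment :: "real \<Rightarrow> nat \<Rightarrow> nat \<Rightarrow> real" where
  "adv_second_moment \<epsilon> t = (\<lambda>i. if i = 0 then \<epsilon> * norm_second_moment t else 0)"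

lemma adv_second_moment_Suc:
  assumes "0 \<le> \<epsilon>"
  shows "adv_second_moment \<epsilon> (Suc t)
    = (\<lambda>i. 1/1000 * adv_second_moment \<epsilon> t i + (1 - 1/1000) * (adv_grad \<epsilon> (Suc t) i)\<^sup>2)"
  using assms by (auto simp: adv_second_moment_def adv_grad_def power_mult_distrib algebra_simps)

lemma adv_adam_step:
  assumes "0 < \<epsilon>"
  shows "1 / sqrt (real t) * adv_grad \<epsilon> t 0 / sqrt (adv_second_moment \<epsilon> t 0 + \<epsilon>) = eff_step t"
proof -
  have w: "0 < norm_second_moment t + 1" using norm_second_moment_bounds[of t] by simp
  have "sqrt (\<epsilon> * norm_second_moment t + \<epsilon>) = sqrt \<epsilon> * sqrt (norm_second_moment t + 1)"
    by (simp add: real_sqrt_mult[symmetric] algebra_simps)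
  then show ?thesis using assms w
    by (simp add: eff_step_def adv_grad_def adv_second_moment_def field_simps)
qed

lemma adv_domain_weighted_projection:
  assumes "0 < w" "p \<in> adv_domain" "\<forall>z\<in>adv_domain. w * (p 0 - h)\<^sup>2 \<le> w * (z 0 - h)\<^sup>2"
  shows "p 0 = clip h"
proof -
  have "(\<lambda>i. if i = 0 then clip h else 0) \<in> adv_domain"
    unfolding adv_domain_def Rd_def using clip_bounds by auto
  then have "w * (p 0 - h)\<^sup>2 \<le> w * (clip h - h)\<^sup>2" using assms(3) by force
  then have "(p 0 - h)\<^sup>2 \<le> (clip h - h)\<^sup>2" using assms(1) by simp
  then show ?thesis using assms(2) nearest_eq_clip unfolding adv_domain_def by auto
qed

fun adv_iterate :: "nat \<Rightarrow> real" where
  "adv_iterate 0 = 0"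
| "adv_iterate (Suc t) = (if t = 0 then 0 else clip (adv_iterate t - eff_step t))"

lemma adv_adam_run_exists:
  assumes "0 < \<epsilon>"
  shows "adv_adam_run \<epsilon> (\<lambda>t i. if i = 0 then adv_iterate t else 0)
    (\<lambda>t. if t = 0 then (\<lambda>i. 0) else adv_grad \<epsilon> t) (adv_second_moment \<epsilon>)"
proof -
  have moment: "adv_second_moment \<epsilon> t = (\<lambda>i. 1/1000 * adv_second_moment \<epsilon> (t - 1) i
      + (1 - 1/1000) * (adv_grad \<epsilon> t i)\<^sup>2)" if "t \<ge> 1" for t
    using adv_second_moment_Suc[of \<epsilon> "t - 1"] assms that by simp
  have projection: "sqrt (adv_second_moment \<epsilon> t 0) * (adv_iterate (t + 1) - (adv_iterate t - eff_step t))\<^sup>2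
      \<le> sqrt (adv_second_moment \<epsilon> t 0) * (z 0 - (adv_iterate t - eff_step t))\<^sup>2"
    if "t \<ge> 1" "z \<in> adv_domain" for t z
  proof (rule mult_left_mono)
    show "(adv_iterate (t + 1) - (adv_iterate t - eff_step t))\<^sup>2 \<le> (z 0 - (adv_iterate t - eff_step t))\<^sup>2"
      using clip_nearest[of "z 0"] that unfolding adv_domain_def by simp
    show "0 \<le> sqrt (adv_second_moment \<epsilon> t 0)"
      using assms norm_second_moment_bounds[of t] by (simp add: adv_second_moment_def)
  qed
  have "adv_second_moment \<epsilon> 0 = (\<lambda>i. 0)" by (simp add: adv_second_moment_def fun_eq_iff)
  moreover have "adv_iterate (t + 1) = clip (adv_iterate t - eff_step t)" if "t \<ge> 1" for t
    using that by simp
  ultimately show ?thesis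
    unfolding adam_eps_run_def Let_def using projection adv_adam_step[OF assms] clip_bounds
    by (intro conjI allI impI ballI moment) (simp_all add: adv_domain_def Rd_def)
qed

lemma adv_adam_run_second_moment:
  assumes "0 \<le> \<epsilon>" "adv_adam_run \<epsilon> x m v"
  shows "v t = adv_second_moment \<epsilon> t"
proof (induction t)
  case 0
  then show ?case using assms(2) by (simp add: adam_eps_run_def adv_second_moment_def fun_eq_iff)
next
  case (Suc t)
  have "v (Suc t) = (\<lambda>i. 1/1000 * v t i + (1 - 1/1000) * (adv_grad \<epsilon> (Suc t) i)\<^sup>2)"
    using assms(2) unfolding adam_eps_run_def by (auto dest: spec[of _ "Suc t"])
  then show ?case using adv_second_moment_Suc[OF assms(1)] Suc.IH by simp
qed

lemma adv_adam_run_iterate: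
  assumes "0 < \<epsilon>" "adv_adam_run \<epsilon> x m v" "t \<ge> 1"
  shows "x t \<in> adv_domain \<and> x (Suc t) 0 = clip (x t 0 - eff_step t)"
proof -
  have run: "x 1 \<in> adv_domain" "\<And>s. s \<ge> 1 \<Longrightarrow> x (s + 1) \<in> adv_domain"
    using assms(2) unfolding adam_eps_run_def Let_def by auto
  have "x t \<in> adv_domain"
  proof (cases "t = 1")
    case False
    then show ?thesis using run(2)[of "t - 1"] assms(3) by simp
  qed (use run in simp)
  moreover have "x (Suc t) 0 = clip (x t 0 - eff_step t)"
  proof (rule adv_domain_weighted_projection)
    have v: "v t = adv_second_moment \<epsilon> t"
      using assms adv_adam_run_second_moment[of \<epsilon> x m v t] by simp
    moreover have "m t = adv_grad \<epsilon> t"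
      using assms unfolding adam_eps_run_def by auto
    ultimately have "x t 0 - 1 / sqrt (real t) * m t 0 / sqrt (v t 0 + \<epsilon>) = x t 0 - eff_step t"
      using adv_adam_step[OF assms(1)] by simp
    then show "\<forall>z\<in>adv_domain. sqrt (v t 0) * (x (Suc t) 0 - (x t 0 - eff_step t))\<^sup>2
        \<le> sqrt (v t 0) * (z 0 - (x t 0 - eff_step t))\<^sup>2"
      using assms(2,3) unfolding adam_eps_run_def Let_def by auto
    obtain s where "t = Suc s" using assms(3) by (cases t) auto
    then show "0 < sqrt (v t 0)"
      using v assms(1) norm_second_moment_Suc_bounds[of s] by (simp add: adv_second_moment_def)
    show "x (Suc t) \<in> adv_domain" using run(2)[OF assms(3)] by simp
  qed
  ultimately show ?thesis ..
qed

lemma adv_regret_lower_bound: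
  "sqrt \<epsilon> * (\<Sum>t=1..T. adv_coeff t * (x t 0 + 1)) \<le> regret adv_domain (adv_loss \<epsilon>) x T"
proof -
  let ?y = "\<lambda>i::nat. if i = 0 then -1 else (0::real)"
  have y: "?y \<in> adv_domain" unfolding adv_domain_def Rd_def by auto
  have "-30 * \<bar>sqrt \<epsilon>\<bar> \<le> adv_loss \<epsilon> t z" if "z \<in> adv_domain" for t z
  proof -
    have "\<bar>adv_loss \<epsilon> t z\<bar> = \<bar>adv_coeff t\<bar> * \<bar>sqrt \<epsilon>\<bar> * \<bar>z 0\<bar>"
      by (simp add: adv_loss_def adv_grad_def abs_mult)
    also have "\<dots> \<le> 30 * \<bar>sqrt \<epsilon>\<bar> * 1"
      using that unfolding adv_domain_def by (intro mult_mono) (auto simp: adv_coeff_def)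
    finally show ?thesis by linarith
  qed
  then have bdd: "bdd_below ((\<lambda>z. \<Sum>t=1..T. adv_loss \<epsilon> t z) ` adv_domain)"
    by (intro bdd_belowI2[of _ "\<Sum>t=1..T. -30 * \<bar>sqrt \<epsilon>\<bar>"] sum_mono) auto
  have "adv_loss \<epsilon> t (x t) - adv_loss \<epsilon> t ?y = sqrt \<epsilon> * (adv_coeff t * (x t 0 + 1))" for t
    by (simp add: adv_loss_def adv_grad_def algebra_simps)
  then have "(\<Sum>t=1..T. adv_loss \<epsilon> t (x t)) - (\<Sum>t=1..T. adv_loss \<epsilon> t ?y)
      = sqrt \<epsilon> * (\<Sum>t=1..T. adv_coeff t * (x t 0 + 1))"
    by (simp only: sum_subtractf[symmetric] sum_distrib_left)
  with regret_ge_comparator[OF y bdd, of x] show ?thesis by linarith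
qed

lemma adv_adam_regret_linear_growth:
  assumes "0 < \<epsilon>" and run: "adv_adam_run \<epsilon> x m v"
  obtains a b where "0 < a" "\<And>n. a * real n - b \<le> regret adv_domain (adv_loss \<epsilon>) x (3 * n)"
proof -
  define z where "z t = x t 0 + 1" for t
  have iterate: "x (Suc t) 0 = clip (x t 0 - eff_step t)" "x t \<in> adv_domain" if "t \<ge> 1" for t
    using adv_adam_run_iterate[OF assms that] by auto
  have z_bounds: "0 \<le> z t" "z t \<le> 2" if "t \<ge> 1" for t
    using iterate(2)[OF that] unfolding z_def adv_domain_def by auto
  have "-1 \<le> x 1 0" "x 1 0 \<le> 1" using iterate(2)[of 1] unfolding adv_domain_def by auto
  note period = eff_step_iteration_period[of "\<lambda>t. x t 0", OF iterate(1) this]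
  have z4: "0 < z 4" using period[of 0] unfolding z_def by simp
  have sum_z: "(real n - 1) * z 4 \<le> (\<Sum>k<n. z (3*k+1))" for n
    using sum_lessThan_ge_of_mono[of "\<lambda>k. z (3*k+1)" n] period z_bounds[of 1]
    unfolding z_def by (simp add: add.commute)
  have weighted: "10 * (\<Sum>k<n. z (3*k+1)) + 10 * (z 1 - z (3*n+1)) \<le> (\<Sum>t=1..3*n. adv_coeff t * z t)" for n
    using period by (intro adv_coeff_weighted_sum_lower_bound) (simp_all add: z_def)
  have growth: "10 * z 4 * real n - (10 * z 4 + 20) \<le> (\<Sum>t=1..3*n. adv_coeff t * z t)" for n
    using sum_z[of n] weighted[of n] z_bounds[of 1] z_bounds[of "3*n+1"] by (simp add: algebra_simps)
  then have "sqrt \<epsilon> * (10 * z 4) * real n - sqrt \<epsilon> * (10 * z 4 + 20)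
      \<le> regret adv_domain (adv_loss \<epsilon>) x (3 * n)" for n
  proof -
    have "sqrt \<epsilon> * (10 * z 4 * real n - (10 * z 4 + 20)) \<le> sqrt \<epsilon> * (\<Sum>t=1..3*n. adv_coeff t * z t)"
      using growth assms(1) by (simp add: mult_left_mono)
    also have "\<dots> \<le> regret adv_domain (adv_loss \<epsilon>) x (3 * n)"
      using adv_regret_lower_bound unfolding z_def .
    finally show ?thesis by (simp add: algebra_simps)
  qed
  moreover have "0 < sqrt \<epsilon> * (10 * z 4)" using assms(1) z4 by simp
  ultimately show ?thesis using that by blast
qed

theorem theorem6:
  fixes \<epsilon> :: real
  assumes "\<epsilon> > 0"
  shows "\<exists>(d::nat) F f grad \<alpha> \<beta>1 \<beta>2.
           oco_problem d F f grad \<and>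
           0 \<le> \<beta>1 \<and> \<beta>1 < 1 \<and> 0 \<le> \<beta>2 \<and> \<beta>2 < 1 \<and> 0 < \<beta>2 \<and> \<beta>1\<^sup>2 / sqrt \<beta>2 < 1 \<and> \<alpha> > 0 \<and>
           (\<exists>x m v. adam_eps_run d F grad \<alpha> \<beta>1 \<beta>2 \<epsilon> x m v) \<and>
           (\<forall>x m v. adam_eps_run d F grad \<alpha> \<beta>1 \<beta>2 \<epsilon> x m v \<longrightarrow>
              \<not> ((\<lambda>T. regret F f x T / real T) \<longlonglongrightarrow> 0))"
proof (rule exI[of _ 1], rule exI[of _ adv_domain], rule exI[of _ "adv_loss \<epsilon>"],
    rule exI[of _ "\<lambda>t x. adv_grad \<epsilon> t"], rule exI[of _ 1], rule exI[of _ 0], rule exI[of _ "1/1000"],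
    intro conjI)
  show "oco_problem 1 adv_domain (adv_loss \<epsilon>) (\<lambda>t x. adv_grad \<epsilon> t)"
    by (rule adv_oco_problem)
  show "\<exists>x m v. adv_adam_run \<epsilon> x m v"
    using adv_adam_run_exists[OF assms] by blast
  show "\<forall>x m v. adv_adam_run \<epsilon> x m v \<longrightarrow> \<not> (\<lambda>T. regret adv_domain (adv_loss \<epsilon>) x T / real T) \<longlonglongrightarrow> 0"
  proof (intro allI impI)
    fix x m v assume "adv_adam_run \<epsilon> x m v"
    then obtain a b where "0 < a" "\<And>n. a * real n - b \<le> regret adv_domain (adv_loss \<epsilon>) x (3 * n)"
      using adv_adam_regret_linear_growth[OF assms] by blast
    then show "\<not> (\<lambda>T. regret adv_domain (adv_loss \<epsilon>) x T / real T) \<longlonglongrightarrow> 0"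
      by (intro not_tendsto_zero_of_linear_growth[of 3 a b]) auto
  qed
qed simp_all

end
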